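(* Let $T$ be a well-formed trace and let $e,f$ be two conflicting write events of $T$. If there exists a correctly reordered prefix of $T$ in which $e$ appears immediately before $f$, then there also exists a correctly reordered prefix of $T$ in which $f$ appears immediately before $e$.
   Context: Traces. A trace $T$ is a finite sequence of pairwise distinct events. Each event $e$ belongs to a thread $\mathrm{tid}(e)$ and is one of: a read $r(x)$ or write $w(x)$ of a shared variable $x$, or an acquire $acq(y)$ or release $rel(y)$ of a lock $y$. The projection of $T$ onto thread $i$ is the subsequence of events of thread $i$. $T$ is well-formed if a thread only acquires a lock not currently held and every release $rel(y)$ in thread $i$ has a matching earlier acquire $acq(y)$ in thread $i$ with no other acquire on $y$ in between. Two events are conflicting if they are reads/writes on the same variable, at least one is a write, and they belong to different threads. For a read $e$ on $x$, a write $f$ on $x$ is the last write of $e$ w.r.t. $T$ if $f$ precedes $e$ in $T$ and no other write on $x$ lies strictly between them. Correct reordering. $T'$ is a correctly reordered prefix of $T$ if $T'$ is a sequence of some of the events of $T$ such that: (i) for every thread $i$, the projection of $T'$ onto $i$ is a prefix of the projection of $T$ onto $i$; (ii) for every read $e$ in $T'$ whose last write w.r.t. $T$ is $f$, $f$ is in $T'$ and is also the last write of $e$ w.r.t. $T'$; (iii) for any two acquires $e_1,e_2$ on the same lock with $e_1$ before $e_2$ in $T'$, the matching release of $e_1$ is in $T'$ and lies strictly between $e_1$ and $e_2$. *)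

theory Defs
  imports Main "HOL-Library.Sublist"
begin

datatype ('x, 'l) action = Rd 'x | Wr 'x | Acq 'l | Rel 'l

definition is_write :: "('ev \<Rightarrow> ('x,'l) action) \<Rightarrow> 'ev \<Rightarrow> bool" where
  "is_write act e \<longleftrightarrow> (\<exists>x. act e = Wr x)"

definition is_read :: "('ev \<Rightarrow> ('x,'l) action) \<Rightarrow> 'ev \<Rightarrow> bool" where
  "is_read act e \<longleftrightarrow> (\<exists>x. act e = Rd x)"

definition proj :: "('ev \<Rightarrow> 't) \<Rightarrow> 't \<Rightarrow> 'ev list \<Rightarrow> 'ev list" where
  "proj tid i T = filter (\<lambda>e. tid e = i) T"

definition lock_held :: "('ev \<Rightarrow> 't) \<Rightarrow> ('ev \<Rightarrow> ('x,'l) action) \<Rightarrow> 'ev list \<Rightarrow> nat \<Rightarrow> 'l \<Rightarrow> bool" where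
  "lock_held tid act T k y \<longleftrightarrow>
     (\<exists>i<k. act (T!i) = Acq y \<and>
        \<not> (\<exists>m. i < m \<and> m < k \<and> act (T!m) = Rel y \<and> tid (T!m) = tid (T!i)))"

definition well_formed :: "('ev \<Rightarrow> 't) \<Rightarrow> ('ev \<Rightarrow> ('x,'l) action) \<Rightarrow> 'ev list \<Rightarrow> bool" where
  "well_formed tid act T \<longleftrightarrow>
     distinct T \<and>
     (\<forall>k<length T. \<forall>y. act (T!k) = Acq y \<longrightarrow> \<not> lock_held tid act T k y) \<and>
     (\<forall>k<length T. \<forall>y. act (T!k) = Rel y \<longrightarrow>
        (\<exists>i<k. act (T!i) = Acq y \<and> tid (T!i) = tid (T!k) \<and>
           (\<forall>m. i < m \<and> m < k \<longrightarrow> act (T!m) \<noteq> Acq y)))"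

definition conflicting :: "('ev \<Rightarrow> 't) \<Rightarrow> ('ev \<Rightarrow> ('x,'l) action) \<Rightarrow> 'ev \<Rightarrow> 'ev \<Rightarrow> bool" where
  "conflicting tid act e f \<longleftrightarrow>
     tid e \<noteq> tid f \<and>
     (\<exists>x. (act e = Wr x \<and> act f = Wr x) \<or> (act e = Wr x \<and> act f = Rd x)
          \<or> (act e = Rd x \<and> act f = Wr x))"

definition before :: "'ev list \<Rightarrow> 'ev \<Rightarrow> 'ev \<Rightarrow> bool" where
  "before xs a b \<longleftrightarrow> (\<exists>i j. i < j \<and> j < length xs \<and> xs!i = a \<and> xs!j = b)"

definition imm_before :: "'ev list \<Rightarrow> 'ev \<Rightarrow> 'ev \<Rightarrow> bool" where
  "imm_before xs a b \<longleftrightarrow> (\<exists>i. Suc i < length xs \<and> xs!i = a \<and> xs!(Suc i) = b)"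

definition last_write :: "('ev \<Rightarrow> ('x,'l) action) \<Rightarrow> 'ev list \<Rightarrow> 'ev \<Rightarrow> 'ev \<Rightarrow> bool" where
  "last_write act xs e f \<longleftrightarrow>
     (\<exists>x i j. act e = Rd x \<and> act f = Wr x \<and> i < j \<and> j < length xs \<and> xs!i = f \<and> xs!j = e \<and>
        (\<forall>k. i < k \<and> k < j \<longrightarrow> act (xs!k) \<noteq> Wr x))"

definition matching_release :: "('ev \<Rightarrow> 't) \<Rightarrow> ('ev \<Rightarrow> ('x,'l) action) \<Rightarrow> 'ev list \<Rightarrow> 'ev \<Rightarrow> 'ev \<Rightarrow> bool" where
  "matching_release tid act T a r \<longleftrightarrow>
     (\<exists>y i j. act a = Acq y \<and> act r = Rel y \<and> tid a = tid r \<and>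
        i < j \<and> j < length T \<and> T!i = a \<and> T!j = r \<and>
        (\<forall>m. i < m \<and> m < j \<longrightarrow> act (T!m) \<noteq> Acq y \<and> act (T!m) \<noteq> Rel y))"

definition correct_reordered_prefix ::
  "('ev \<Rightarrow> 't) \<Rightarrow> ('ev \<Rightarrow> ('x,'l) action) \<Rightarrow> 'ev list \<Rightarrow> 'ev list \<Rightarrow> bool" where
  "correct_reordered_prefix tid act T T' \<longleftrightarrow>
     distinct T' \<and> set T' \<subseteq> set T \<and>
     (\<forall>i. prefix (proj tid i T') (proj tid i T)) \<and>
     (\<forall>e\<in>set T'. \<forall>f. last_write act T e f \<longrightarrow> f \<in> set T' \<and> last_write act T' e f) \<and>
     (\<forall>e1 e2 y. act e1 = Acq y \<and> act e2 = Acq y \<and> before T' e1 e2 \<longrightarrow>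
        (\<exists>r. matching_release tid act T e1 r \<and> r \<in> set T' \<and>
             before T' e1 r \<and> before T' r e2))"

end

theory Submission
  imports Defs
begin

text \<open>Cut a correct reordering witnessing \<open>e\<close> immediately before \<open>f\<close> right after \<open>f\<close>:
  correct reorderings are closed under taking prefixes, because every read and every pair of
  acquires is justified by events occurring before it. Then swap the two final events. Writes
  are neither reads nor acquires, so no read or lock constraint has them as its later event,
  and since \<open>e\<close> and \<open>f\<close> belong to different threads the per-thread projections do not change.\<close>

lemma nth_append_index_in_prefix:
  assumes "distinct (P @ xs)" "j < length (P @ xs)" "(P @ xs) ! j = b" "b \<in> set P"
  shows "j < length P"
proof (rule ccontr)
  assume "\<not> j < length P"
  then have "b \<in> set xs" using assms(2,3) by (auto simp: nth_append)
  then show False using assms(1,4) by auto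
qed

lemma before_append_iff:
  assumes "distinct (P @ xs)" "b \<in> set P"
  shows "before (P @ xs) a b \<longleftrightarrow> before P a b"
proof
  assume "before (P @ xs) a b"
  then obtain i j where ij: "i < j" "j < length (P @ xs)" "(P @ xs) ! i = a" "(P @ xs) ! j = b"
    unfolding before_def by blast
  have "j < length P"
    using nth_append_index_in_prefix[OF assms(1) ij(2,4) assms(2)] .
  with ij show "before P a b"
    unfolding before_def by (auto simp: nth_append)
next
  assume "before P a b"
  then obtain i j where "i < j" "j < length P" "P ! i = a" "P ! j = b"
    unfolding before_def by blast
  then show "before (P @ xs) a b"
    unfolding before_def by (intro exI[of _ i] exI[of _ j]) (simp add: nth_append)
qed

lemma before_in_set: "before P a b \<Longrightarrow> a \<in> set P \<and> b \<in> set P"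
  unfolding before_def by auto

lemma last_write_append_iff:
  assumes "distinct (P @ xs)" "r \<in> set P"
  shows "last_write act (P @ xs) r w \<longleftrightarrow> last_write act P r w"
proof
  assume "last_write act (P @ xs) r w"
  then obtain x i j where ij: "act r = Rd x" "act w = Wr x" "i < j" "j < length (P @ xs)"
      "(P @ xs) ! i = w" "(P @ xs) ! j = r" "\<forall>k. i < k \<and> k < j \<longrightarrow> act ((P @ xs) ! k) \<noteq> Wr x"
    unfolding last_write_def by blast
  have "j < length P"
    using nth_append_index_in_prefix[OF assms(1) ij(4,6) assms(2)] .
  with ij show "last_write act P r w"
    unfolding last_write_def by (intro exI[of _ x] exI[of _ i] exI[of _ j]) (simp add: nth_append)
next
  assume "last_write act P r w"
  then obtain x i j where "act r = Rd x" "act w = Wr x" "i < j" "j < length P"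
      "P ! i = w" "P ! j = r" "\<forall>k. i < k \<and> k < j \<longrightarrow> act (P ! k) \<noteq> Wr x"
    unfolding last_write_def by blast
  then show "last_write act (P @ xs) r w"
    unfolding last_write_def by (intro exI[of _ x] exI[of _ i] exI[of _ j]) (simp add: nth_append)
qed

lemma last_write_in_set: "last_write act P r w \<Longrightarrow> r \<in> set P \<and> w \<in> set P \<and> is_read act r"
  unfolding last_write_def is_read_def by auto

lemma imm_before_iff_append: "imm_before xs a b \<longleftrightarrow> (\<exists>P Q. xs = P @ [a, b] @ Q)"
proof
  assume "imm_before xs a b"
  then obtain i where i: "Suc i < length xs" "xs ! i = a" "xs ! Suc i = b"
    unfolding imm_before_def by blast
  then have "xs = take i xs @ [a, b] @ drop (Suc (Suc i)) xs"
    by (metis Cons_nth_drop_Suc Suc_lessD append_Cons append_Nil append_take_drop_id)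
  then show "\<exists>P Q. xs = P @ [a, b] @ Q" by blast
next
  assume "\<exists>P Q. xs = P @ [a, b] @ Q"
  then obtain P Q where "xs = P @ [a, b] @ Q" by blast
  then show "imm_before xs a b"
    unfolding imm_before_def by (intro exI[of _ "length P"]) (simp add: nth_append)
qed

lemma correct_reordered_prefix_append_left:
  assumes crp: "correct_reordered_prefix tid act T (P @ xs)"
  shows "correct_reordered_prefix tid act T P"
proof -
  have d: "distinct (P @ xs)"
    using crp unfolding correct_reordered_prefix_def by blast
  have proj: "prefix (proj tid i P) (proj tid i T)" for i
  proof -
    have "prefix (proj tid i P) (proj tid i (P @ xs))" unfolding proj_def by simp
    moreover have "prefix (proj tid i (P @ xs)) (proj tid i T)"
      using crp unfolding correct_reordered_prefix_def by blast
    ultimately show ?thesis by (rule prefix_order.trans)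
  qed
  have reads: "w \<in> set P \<and> last_write act P r w"
    if r: "r \<in> set P" and "last_write act T r w" for r w
  proof -
    have "last_write act (P @ xs) r w"
      using crp that unfolding correct_reordered_prefix_def by auto
    then have "last_write act P r w"
      using last_write_append_iff[OF d r] by blast
    then show ?thesis using last_write_in_set by fast
  qed
  have locks: "\<exists>r. matching_release tid act T e1 r \<and> r \<in> set P \<and> before P e1 r \<and> before P r e2"
    if acq: "act e1 = Acq y" "act e2 = Acq y" and e1_e2: "before P e1 e2" for e1 e2 y
  proof -
    have e2: "e2 \<in> set P" using before_in_set[OF e1_e2] by blast
    have "before (P @ xs) e1 e2" using before_append_iff[OF d e2] e1_e2 by blast
    then obtain r where r: "matching_release tid act T e1 r"
        "before (P @ xs) e1 r" "before (P @ xs) r e2"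
      using crp acq unfolding correct_reordered_prefix_def by blast
    have r_e2: "before P r e2" using r(3) before_append_iff[OF d e2] by blast
    then have rP: "r \<in> set P" using before_in_set by fast
    have "before P e1 r" using r(2) before_append_iff[OF d rP] by blast
    with r(1) rP r_e2 show ?thesis by blast
  qed
  from crp d proj reads locks show ?thesis
    unfolding correct_reordered_prefix_def by auto
qed

lemma correct_reordered_prefix_swap_last:
  assumes crp: "correct_reordered_prefix tid act T (P @ [e, f])"
    and reads_ef: "\<not> is_read act e" "\<not> is_read act f"
    and acqs_ef: "\<And>y. act e \<noteq> Acq y" "\<And>y. act f \<noteq> Acq y"
    and "tid e \<noteq> tid f"
  shows "correct_reordered_prefix tid act T (P @ [f, e])"
proof -
  have d: "distinct (P @ [e, f])"
    using crp unfolding correct_reordered_prefix_def by blast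
  have d': "distinct (P @ [f, e])" using d by auto
  have proj: "proj tid i (P @ [f, e]) = proj tid i (P @ [e, f])" for i
    unfolding proj_def using \<open>tid e \<noteq> tid f\<close> by auto
  have reads: "w \<in> set (P @ [f, e]) \<and> last_write act (P @ [f, e]) r w"
    if r: "r \<in> set (P @ [f, e])" and lw: "last_write act T r w" for r w
  proof -
    have lw': "last_write act (P @ [e, f]) r w"
      using crp r lw unfolding correct_reordered_prefix_def by auto
    have rP: "r \<in> set P"
      using last_write_in_set[OF lw'] r reads_ef by auto
    have "last_write act P r w"
      using lw' last_write_append_iff[OF d rP] by blast
    then show ?thesis
      using last_write_in_set last_write_append_iff[OF d' rP] by fastforce
  qed
  have locks: "\<exists>r. matching_release tid act T e1 r \<and> r \<in> set (P @ [f, e]) \<and>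
      before (P @ [f, e]) e1 r \<and> before (P @ [f, e]) r e2"
    if acq: "act e1 = Acq y" "act e2 = Acq y" and e1_e2: "before (P @ [f, e]) e1 e2" for e1 e2 y
  proof -
    have e2: "e2 \<in> set P"
      using before_in_set[OF e1_e2] acq(2) acqs_ef by force
    have "before (P @ [e, f]) e1 e2"
      using e1_e2 before_append_iff[OF d e2] before_append_iff[OF d' e2] by blast
    then obtain r where r: "matching_release tid act T e1 r"
        "before (P @ [e, f]) e1 r" "before (P @ [e, f]) r e2"
      using crp acq unfolding correct_reordered_prefix_def by blast
    have r_e2: "before P r e2" using r(3) before_append_iff[OF d e2] by blast
    then have rP: "r \<in> set P" using before_in_set by fast
    have "before P e1 r" using r(2) before_append_iff[OF d rP] by blast
    with r(1) rP r_e2 show ?thesis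
      using before_append_iff[OF d' rP] before_append_iff[OF d' e2] by auto
  qed
  from crp d' proj reads locks show ?thesis
    unfolding correct_reordered_prefix_def by auto
qed

theorem mainTheorem9:
  fixes tid :: "'ev \<Rightarrow> 't" and act :: "'ev \<Rightarrow> ('x, 'l) action"
    and T :: "'ev list" and e f :: 'ev
  assumes "well_formed tid act T"
    and "e \<in> set T" and "f \<in> set T"
    and "is_write act e" and "is_write act f"
    and "conflicting tid act e f"
    and "\<exists>T'. correct_reordered_prefix tid act T T' \<and> imm_before T' e f"
  shows "\<exists>T''. correct_reordered_prefix tid act T T'' \<and> imm_before T'' f e"
proof -
  obtain P Q where "correct_reordered_prefix tid act T ((P @ [e, f]) @ Q)"
    using assms(7) unfolding imm_before_iff_append by auto
  then have "correct_reordered_prefix tid act T (P @ [e, f])"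
    by (rule correct_reordered_prefix_append_left)
  moreover have "\<not> is_read act e" "\<not> is_read act f" "act e \<noteq> Acq y" "act f \<noteq> Acq y" for y
    using assms(4,5) unfolding is_read_def is_write_def by auto
  moreover have "tid e \<noteq> tid f"
    using assms(6) unfolding conflicting_def by blast
  ultimately have "correct_reordered_prefix tid act T (P @ [f, e])"
    by (rule correct_reordered_prefix_swap_last)
  moreover have "imm_before (P @ [f, e]) f e"
    unfolding imm_before_iff_append by auto
  ultimately show ?thesis by blast
qed

end
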